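(* Let $f_0,f_1\in \mathrm{PL}_0(\mathbf{I})$ satisfy $[f_1^{f_0},f_0f_1^{-1}]=1$ and $[f_0f_1^{-1},f_1^{f_0^2}]=1$. If $A$ is an orbital of $f_0$ and $B$ is an orbital of $f_1$ with $A\cap B\neq\emptyset$, then either $A\subseteq B$ or $B\subseteq A$.
   Context: $\mathrm{PL}_0(\mathbf{I})$ is the group of orientation-preserving piecewise-linear homeomorphisms of $[0,1]$ with finitely many points of non-differentiability. Functions act on the right: $tf=f(t)$, $fg=g\circ f$, $a^b=b^{-1}ab$, $[a,b]=aba^{-1}b^{-1}$. The orbitals of $f$ are the connected components (open intervals) of $\operatorname{Supp}(f)=\{x: xf\ne x\}$. *)

theory Defs
  imports "HOL-Analysis.Analysis"
begin

definition PL0 :: "(real \<Rightarrow> real) \<Rightarrow> bool" where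
  "PL0 f \<longleftrightarrow>
     (\<forall>x. x \<notin> {0..1} \<longrightarrow> f x = x) \<and>
     f 0 = 0 \<and> f 1 = 1 \<and>
     strict_mono_on {0..1} f \<and>
     continuous_on {0..1} f \<and>
     (\<exists>T. finite T \<and> T \<subseteq> {0..1} \<and> 0 \<in> T \<and> 1 \<in> T \<and>
        (\<forall>a b. a \<in> T \<and> b \<in> T \<and> a < b \<and> {a<..<b} \<inter> T = {} \<longrightarrow>
           (\<exists>m c. \<forall>x\<in>{a..b}. f x = m * x + c)))"

text \<open>Right actions: t(fg) = (tf)g, so the product fg is g \<circ> f.\<close>
definition pl_mult :: "(real \<Rightarrow> real) \<Rightarrow> (real \<Rightarrow> real) \<Rightarrow> (real \<Rightarrow> real)" where
  "pl_mult f g = g \<circ> f"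

definition pl_inv :: "(real \<Rightarrow> real) \<Rightarrow> (real \<Rightarrow> real)" where
  "pl_inv f = inv f"

definition pl_conj :: "(real \<Rightarrow> real) \<Rightarrow> (real \<Rightarrow> real) \<Rightarrow> (real \<Rightarrow> real)" where
  "pl_conj a b = pl_mult (pl_mult (pl_inv b) a) b"

definition pl_comm :: "(real \<Rightarrow> real) \<Rightarrow> (real \<Rightarrow> real) \<Rightarrow> (real \<Rightarrow> real)" where
  "pl_comm a b = pl_mult (pl_mult (pl_mult a b) (pl_inv a)) (pl_inv b)"

definition supp :: "(real \<Rightarrow> real) \<Rightarrow> real set" where
  "supp f = {x. f x \<noteq> x}"

definition orbital :: "(real \<Rightarrow> real) \<Rightarrow> real set \<Rightarrow> bool" where
  "orbital f A \<longleftrightarrow> (\<exists>x\<in>supp f. A = connected_component_set (supp f) x)"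

end

theory Submission
  imports Defs
begin

text \<open>Put u = f0 f1^-1; the hypotheses say that u commutes with f1^f0 and with f1^(f0^2).
  Two commuting homeomorphisms with affine right germs that both move a point a have the
  same orbital at a: if h fixed a point of the orbital (p, q) of u, then iterating u or u^-1
  towards p produces fixed points of h accumulating at p, so the affine germ of h at p is the
  identity, and pushing every point of (p, q) into that germ shows that h is the identity
  on (p, q).

  If an orbital A of f0 and an orbital B of f1 crossed, an endpoint a of A would lie in B.
  It is fixed by f0 and moved by f1, hence moved by u and by both conjugates, whose orbitals
  at a are f0(B) and f0^2(B). Both equal the orbital of u at a, so f0(B) = B and f0 fixes
  the endpoints of B; but one of them lies in A, where f0 has no fixed point.\<close>

definition right_affine_germs :: "(real \<Rightarrow> real) \<Rightarrow> bool" where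
  "right_affine_germs f \<longleftrightarrow> (\<forall>c. \<exists>e>0. \<exists>m k. \<forall>x\<in>{c..c+e}. f x = m * x + k)"

definition affine_germ_homeo :: "(real \<Rightarrow> real) \<Rightarrow> bool" where
  "affine_germ_homeo f \<longleftrightarrow> bij f \<and> strict_mono f \<and> continuous_on UNIV f \<and>
     right_affine_germs f \<and> (\<forall>x. x \<notin> {0..1} \<longrightarrow> f x = x)"

lemma affine_slope_pos:
  fixes g :: "real \<Rightarrow> real"
  assumes "strict_mono g" "e > 0" "\<forall>x\<in>{c..c+e}. g x = m * x + k"
  shows "m > 0"
proof -
  have "g c < g (c + e)" using assms(1,2) by (simp add: strict_mono_less)
  moreover have "g c = m * c + k" "g (c + e) = m * (c + e) + k" using assms by auto
  ultimately have "m * e > 0" by (simp add: algebra_simps)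
  then show ?thesis using \<open>e > 0\<close> by (simp add: zero_less_mult_iff)
qed

lemma right_affine_germs_comp:
  assumes "right_affine_germs f" "right_affine_germs g" "strict_mono g"
  shows "right_affine_germs (f \<circ> g)"
  unfolding right_affine_germs_def
proof
  fix c
  obtain e1 m1 k1 where e1: "e1 > 0" and g: "\<forall>x\<in>{c..c+e1}. g x = m1 * x + k1"
    using assms(2) unfolding right_affine_germs_def by blast
  obtain e2 m2 k2 where e2: "e2 > 0" and f: "\<forall>y\<in>{g c..g c+e2}. f y = m2 * y + k2"
    using assms(1) unfolding right_affine_germs_def by blast
  have m1: "m1 > 0" using affine_slope_pos[OF assms(3) e1 g] .
  define d where "d = min e1 (e2 / m1)"
  have "(f \<circ> g) x = (m2 * m1) * x + (m2 * k1 + k2)" if x: "x \<in> {c..c+d}" for x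
  proof -
    have "x \<in> {c..c+e1}" using x by (auto simp: d_def)
    then have gx: "g x = m1 * x + k1" and gc: "g c = m1 * c + k1" using g by auto
    have "m1 * (x - c) \<le> m1 * d" using x m1 by simp
    also have "\<dots> \<le> e2" using m1 by (simp add: d_def min_def field_simps)
    finally have "g x \<in> {g c..g c+e2}" using x m1 gx gc by (auto simp: algebra_simps)
    then show ?thesis using f gx by (simp add: algebra_simps)
  qed
  moreover have "d > 0" using m1 e1 e2 by (simp add: d_def)
  ultimately show "\<exists>e>0. \<exists>m k. \<forall>x\<in>{c..c+e}. (f \<circ> g) x = m * x + k" by blast
qed

lemma right_affine_germs_inv:
  assumes "right_affine_germs g" "strict_mono g" "bij g"
  shows "right_affine_germs (inv g)"
  unfolding right_affine_germs_def
proof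
  fix c
  define d where "d = inv g c"
  have gd: "g d = c" using assms(3) by (simp add: d_def bij_is_surj surj_f_inv_f)
  obtain e m k where e: "e > 0" and g: "\<forall>x\<in>{d..d+e}. g x = m * x + k"
    using assms(1) unfolding right_affine_germs_def by blast
  have m: "m > 0" using affine_slope_pos[OF assms(2) e g] .
  have "inv g y = (1 / m) * y + (- k / m)" if y: "y \<in> {c..c+m*e}" for y
  proof -
    have "c = m * d + k" using gd g e by auto
    then have "(y - k) / m \<in> {d..d+e}" using y m by (auto simp: field_simps)
    then have "g ((y - k) / m) = y" using g m by (auto simp: field_simps)
    then have "inv g y = (y - k) / m" using assms(3) by (metis bij_inv_eq_iff)
    then show ?thesis using m by (simp add: field_simps)
  qed
  then show "\<exists>e>0. \<exists>m k. \<forall>y\<in>{c..c+e}. inv g y = m * y + k"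
    using m e by (metis mult_pos_pos)
qed

lemma affine_germ_homeo_comp:
  assumes "affine_germ_homeo f" "affine_germ_homeo g"
  shows "affine_germ_homeo (f \<circ> g)"
proof -
  have "bij (f \<circ> g)" "strict_mono (f \<circ> g)" "right_affine_germs (f \<circ> g)"
    using assms right_affine_germs_comp[of f g]
    by (auto simp: affine_germ_homeo_def bij_comp strict_mono_def)
  moreover have "continuous_on UNIV (f \<circ> g)"
    using assms unfolding affine_germ_homeo_def comp_def
    by (blast intro: continuous_on_compose2[of UNIV f UNIV g])
  ultimately show ?thesis using assms by (simp add: affine_germ_homeo_def)
qed

lemma affine_germ_homeo_inv:
  assumes "affine_germ_homeo f"
  shows "affine_germ_homeo (inv f)"
proof -
  have b: "bij f" and sm: "strict_mono f" and c: "continuous_on UNIV f"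
    and r: "right_affine_germs f" and o: "\<forall>x. x \<notin> {0..1} \<longrightarrow> f x = x"
    using assms unfolding affine_germ_homeo_def by auto
  have "strict_mono (inv f)"
  proof (rule strict_monoI)
    fix x y :: real
    assume "x < y"
    then show "inv f x < inv f y"
      using b sm by (metis bij_inv_eq_iff not_less_iff_gr_or_eq strict_mono_less)
  qed
  moreover have "continuous_on UNIV (inv f)"
  proof -
    have ic: "\<forall>x. isCont f x" using c by (simp add: continuous_on_eq_continuous_at)
    have "isCont (inv f) (f x)" for x
      by (rule isCont_inverse_function[of 1]) (use b ic in \<open>auto simp: bij_is_inj\<close>)
    then have "isCont (inv f) y" for y using b by (metis bij_pointE)
    then show ?thesis by (simp add: continuous_at_imp_continuous_on)
  qed
  moreover have "\<forall>x. x \<notin> {0..1} \<longrightarrow> inv f x = x" using o b by (metis bij_inv_eq_iff)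
  ultimately show ?thesis
    using b sm r right_affine_germs_inv unfolding affine_germ_homeo_def
    by (simp add: bij_imp_bij_inv)
qed

lemma PL0_fixes_outside:
  assumes "PL0 f" "x \<notin> {0<..<1}"
  shows "f x = x"
proof -
  have "\<forall>x. x \<notin> {0..1} \<longrightarrow> f x = x" "f 0 = 0" "f 1 = 1"
    using assms unfolding PL0_def by blast+
  then show ?thesis using assms(2) by (cases "x = 0 \<or> x = 1") auto
qed

lemma PL0_maps_unit_interval:
  assumes "PL0 f" "x \<in> {0..1}"
  shows "f x \<in> {0..1}"
proof -
  have sm: "strict_mono_on {0..1} f" and "f 0 = 0" "f 1 = 1"
    using assms(1) unfolding PL0_def by blast+
  moreover have "f 0 \<le> f x" "f x \<le> f 1"
    using sm assms(2) by (auto simp: strict_mono_on_def le_less)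
  ultimately show ?thesis by simp
qed

lemma PL0_strict_mono:
  assumes "PL0 f"
  shows "strict_mono f"
proof (rule strict_monoI)
  fix x y :: real
  assume "x < y"
  have sm: "strict_mono_on {0..1} f" using assms unfolding PL0_def by blast
  show "f x < f y"
  proof (cases "x \<in> {0..1} \<and> y \<in> {0..1}")
    case True
    then show ?thesis using sm \<open>x < y\<close> by (auto simp: strict_mono_on_def)
  next
    case False
    then consider "x < 0" | "1 < y"
      using \<open>x < y\<close> by fastforce
    then show ?thesis
    proof cases
      case 1
      then have "f x = x" using PL0_fixes_outside[OF assms] by simp
      moreover have "x < f y"
        using PL0_maps_unit_interval[OF assms, of y] PL0_fixes_outside[OF assms, of y] 1 \<open>x < y\<close>
        by (cases "y \<in> {0..1}") auto
      ultimately show ?thesis by simp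
    next
      case 2
      then have "f y = y" using PL0_fixes_outside[OF assms] by simp
      moreover have "f x < y"
        using PL0_maps_unit_interval[OF assms, of x] PL0_fixes_outside[OF assms, of x] 2 \<open>x < y\<close>
        by (cases "x \<in> {0..1}") auto
      ultimately show ?thesis by simp
    qed
  qed
qed

lemma PL0_continuous:
  assumes "PL0 f"
  shows "continuous_on UNIV f"
proof -
  have "continuous_on S f" if "S \<inter> {0<..<1} = {}" for S
  proof (rule continuous_on_eq[OF continuous_on_id])
    fix x
    assume "x \<in> S"
    then have "x \<notin> {0<..<1}" using that by blast
    then show "x = f x" using PL0_fixes_outside[OF assms] by simp
  qed
  moreover have "{..0} \<inter> {0<..<1} = ({}::real set)" "{1..} \<inter> {0<..<1} = ({}::real set)" by auto
  ultimately have "continuous_on {..0} f" "continuous_on {1..} f" by blast+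
  moreover have "continuous_on {0..1} f" using assms unfolding PL0_def by blast
  ultimately have "continuous_on ({..0} \<union> {0..1} \<union> {1..}) f"
    by (intro continuous_on_closed_Un) auto
  moreover have "{..0} \<union> {0..1} \<union> {1..} = (UNIV :: real set)" by auto
  ultimately show ?thesis by simp
qed

lemma PL0_surj:
  assumes "PL0 f"
  shows "surj f"
proof -
  have "y \<in> range f" for y
  proof (cases "y \<in> {0..1}")
    case True
    moreover have "f 0 = 0" "f 1 = 1" "continuous_on {0..1} f"
      using assms unfolding PL0_def by blast+
    ultimately obtain x where "f x = y"
      using IVT'[of f 0 y 1] by auto
    then show ?thesis by auto
  next
    case False
    then have "f y = y" by (intro PL0_fixes_outside[OF assms]) auto
    then show ?thesis by (metis rangeI)
  qed
  then show ?thesis by auto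
qed

lemma PL0_right_affine_germs:
  assumes "PL0 f"
  shows "right_affine_germs f"
  unfolding right_affine_germs_def
proof
  fix c :: real
  from assms obtain T where T: "finite T" "0 \<in> T" "1 \<in> T"
    and pieces: "\<forall>a b. a \<in> T \<and> b \<in> T \<and> a < b \<and> {a<..<b} \<inter> T = {} \<longrightarrow>
      (\<exists>m k. \<forall>x\<in>{a..b}. f x = m * x + k)"
    unfolding PL0_def by blast
  consider "c < 0" | "1 \<le> c" | "0 \<le> c" "c < 1" by linarith
  then show "\<exists>e>0. \<exists>m k. \<forall>x\<in>{c..c+e}. f x = m * x + k"
  proof cases
    case 1
    then have "\<forall>x\<in>{c..c+(-c)}. f x = 1 * x + 0"
      using PL0_fixes_outside[OF assms] by auto
    then show ?thesis using 1 by (metis neg_0_less_iff_less)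
  next
    case 2
    then have "\<forall>x\<in>{c..c+1}. f x = 1 * x + 0"
      using PL0_fixes_outside[OF assms] by auto
    then show ?thesis by (metis zero_less_one)
  next
    case 3
    define a where "a = Max {t\<in>T. t \<le> c}"
    define b where "b = Min {t\<in>T. c < t}"
    have "a \<in> {t\<in>T. t \<le> c}" unfolding a_def by (rule Max_in) (use T 3 in auto)
    moreover have "t \<le> a" if "t \<in> T" "t \<le> c" for t
      unfolding a_def by (rule Max_ge) (use T that in auto)
    ultimately have a: "a \<in> T" "a \<le> c" "\<And>t. t \<in> T \<Longrightarrow> t \<le> c \<Longrightarrow> t \<le> a"
      by auto
    have "b \<in> {t\<in>T. c < t}" unfolding b_def by (rule Min_in) (use T 3 in auto)
    moreover have "b \<le> t" if "t \<in> T" "c < t" for t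
      unfolding b_def by (rule Min_le) (use T that in auto)
    ultimately have b: "b \<in> T" "c < b" "\<And>t. t \<in> T \<Longrightarrow> c < t \<Longrightarrow> b \<le> t"
      by auto
    have "t \<notin> T" if "a < t" "t < b" for t
      using a(3)[of t] b(3)[of t] that by linarith
    then have "{a<..<b} \<inter> T = {}" by auto
    then obtain m k where "\<forall>x\<in>{a..b}. f x = m * x + k"
      using pieces a(1) b(1) \<open>a \<le> c\<close> \<open>c < b\<close> by fastforce
    then have "\<forall>x\<in>{c..c+(b-c)}. f x = m * x + k" using a(2) by auto
    then show ?thesis using b(2) by (metis diff_gt_0_iff_gt)
  qed
qed

lemma PL0_affine_germ_homeo:
  assumes "PL0 f"
  shows "affine_germ_homeo f"
proof -
  have "strict_mono f" using assms by (rule PL0_strict_mono)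
  then have "bij f" using PL0_surj[OF assms] by (simp add: bij_def strict_mono_imp_inj_on)
  moreover have "\<forall>x. x \<notin> {0..1} \<longrightarrow> f x = x" using PL0_fixes_outside[OF assms] by auto
  ultimately show ?thesis
    using \<open>strict_mono f\<close> PL0_continuous[OF assms] PL0_right_affine_germs[OF assms]
    by (simp add: affine_germ_homeo_def)
qed

lemma connected_component_supp_interval:
  fixes f :: "real \<Rightarrow> real"
  assumes cont: "continuous_on UNIV f" and outside: "\<forall>x. x \<notin> {0..1} \<longrightarrow> f x = x"
    and a: "a \<in> supp f"
  obtains p q where "f p = p" "f q = q" "connected_component_set (supp f) a = {p<..<q}"
proof -
  have closed_fix: "closed {x. f x = x}"
    using closed_Collect_eq[OF cont continuous_on_id] by simp
  have a01: "a \<in> {0..1}" using a outside by (auto simp: supp_def)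
  define P where "P = {x. x \<le> a \<and> f x = x}"
  define Q where "Q = {x. a \<le> x \<and> f x = x}"
  have "closed P" unfolding P_def
    using closed_Int[OF closed_atMost closed_fix] by (simp add: Int_def atMost_def)
  moreover have "-1 \<in> P" using outside a01 by (auto simp: P_def)
  moreover have bP: "bdd_above P" by (auto simp: P_def bdd_above_def)
  ultimately have "Sup P \<in> P" using closed_contains_Sup by blast
  then have fp: "f (Sup P) = Sup P" and "Sup P < a"
    using a by (auto simp: P_def supp_def le_less)
  have "closed Q" unfolding Q_def
    using closed_Int[OF closed_atLeast closed_fix] by (simp add: Int_def atLeast_def)
  moreover have "2 \<in> Q" using outside a01 by (auto simp: Q_def)
  moreover have bQ: "bdd_below Q" by (auto simp: Q_def bdd_below_def)
  ultimately have "Inf Q \<in> Q" using closed_contains_Inf by blast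
  then have fq: "f (Inf Q) = Inf Q" and "a < Inf Q"
    using a by (auto simp: Q_def supp_def le_less)
  let ?C = "connected_component_set (supp f) a"
  have "{Sup P<..<Inf Q} \<subseteq> supp f"
  proof
    fix x
    assume x: "x \<in> {Sup P<..<Inf Q}"
    have "x \<notin> P" using cSup_upper[OF _ bP] x by force
    moreover have "x \<notin> Q" using cInf_lower[OF _ bQ] x by force
    ultimately show "x \<in> supp f" by (auto simp: P_def Q_def supp_def)
  qed
  then have "{Sup P<..<Inf Q} \<subseteq> ?C"
    using \<open>Sup P < a\<close> \<open>a < Inf Q\<close> by (intro connected_component_maximal) auto
  moreover have "?C \<subseteq> {Sup P<..<Inf Q}"
  proof
    fix y
    assume y: "y \<in> ?C"
    have a_C: "a \<in> ?C" using a by simp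
    have "z \<notin> ?C" if "f z = z" for z
      using that connected_component_subset by (fastforce simp: supp_def)
    then have "Sup P \<notin> ?C" "Inf Q \<notin> ?C" using fp fq by auto
    moreover have "{y..a} \<subseteq> ?C"
      by (rule connected_contains_Icc[OF connected_connected_component y a_C])
    moreover have "{a..y} \<subseteq> ?C"
      by (rule connected_contains_Icc[OF connected_connected_component a_C y])
    ultimately have "\<not> y \<le> Sup P" "\<not> Inf Q \<le> y"
      using \<open>Sup P < a\<close> \<open>a < Inf Q\<close> by (auto simp: subset_eq)
    then show "y \<in> {Sup P<..<Inf Q}" by simp
  qed
  ultimately show thesis using that fp fq by blast
qed

lemma orbital_subset_supp: "orbital f A \<Longrightarrow> A \<subseteq> supp f"
  unfolding orbital_def using connected_component_subset by blast

lemma orbital_eq_connected_component: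
  assumes "orbital f A" "a \<in> A"
  shows "A = connected_component_set (supp f) a"
  using assms connected_component_eq unfolding orbital_def by blast

lemma orbital_interval:
  fixes f :: "real \<Rightarrow> real"
  assumes "continuous_on UNIV f" "\<forall>x. x \<notin> {0..1} \<longrightarrow> f x = x" "orbital f A"
  obtains p q where "f p = p" "f q = q" "A = {p<..<q}"
  using assms connected_component_supp_interval unfolding orbital_def by metis

lemma supp_conj:
  assumes "bij g"
  shows "supp (g \<circ> f \<circ> inv g) = g ` supp f"
proof -
  have "x \<in> supp (g \<circ> f \<circ> inv g) \<longleftrightarrow> inv g x \<in> supp f" for x
    using assms by (auto simp: supp_def bij_inv_eq_iff)
  moreover have "inv g x \<in> supp f \<longleftrightarrow> x \<in> g ` supp f" for x
    using assms by (metis bij_inv_eq_iff image_iff)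
  ultimately show ?thesis by blast
qed

lemma affine_germ_homeo_homeomorphism:
  assumes "affine_germ_homeo g"
  shows "homeomorphism UNIV UNIV g (inv g)"
proof -
  have "bij g" "continuous_on UNIV g" "continuous_on UNIV (inv g)"
    using assms affine_germ_homeo_inv[OF assms] unfolding affine_germ_homeo_def by auto
  then show ?thesis
    using bij_imp_bij_inv[of g]
    by (auto simp: homeomorphism_def bij_is_inj bij_is_surj surj_f_inv_f)
qed

lemma connected_component_supp_conj:
  assumes "affine_germ_homeo g"
  shows "connected_component_set (supp (g \<circ> f \<circ> inv g)) (g a) =
    g ` connected_component_set (supp f) a"
proof (cases "a \<in> supp f")
  case True
  have "homeomorphism (supp f) (g ` supp f) g (inv g)"
    using affine_germ_homeo_homeomorphism[OF assms] by (rule homeomorphism_of_subsets) auto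
  then show ?thesis
    using connected_component_set_homeomorphism[OF _ True] supp_conj assms
    by (simp add: affine_germ_homeo_def)
next
  case False
  then have "g a \<notin> g ` supp f"
    using assms by (auto simp: affine_germ_homeo_def bij_is_inj inj_image_mem_iff)
  then show ?thesis using False supp_conj assms
    by (simp add: affine_germ_homeo_def connected_component_eq_empty[THEN iffD2])
qed

lemma pl_comm_eq_id_iff:
  assumes "bij a" "bij b"
  shows "pl_comm a b = id \<longleftrightarrow> b \<circ> a = a \<circ> b"
proof -
  have ab: "bij (a \<circ> b)" using assms by (simp add: bij_comp)
  have "pl_comm a b = inv (a \<circ> b) \<circ> (b \<circ> a)"
    using assms by (simp add: pl_comm_def pl_mult_def pl_inv_def o_inv_distrib comp_assoc)
  moreover have "inv (a \<circ> b) \<circ> (b \<circ> a) = id \<longleftrightarrow> b \<circ> a = a \<circ> b"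
  proof
    assume inv_comp: "inv (a \<circ> b) \<circ> (b \<circ> a) = id"
    have "(a \<circ> b) \<circ> inv (a \<circ> b) = id" using surj_iff bij_is_surj[OF ab] by blast
    then have "b \<circ> a = ((a \<circ> b) \<circ> inv (a \<circ> b)) \<circ> (b \<circ> a)" by simp
    also have "\<dots> = (a \<circ> b) \<circ> (inv (a \<circ> b) \<circ> (b \<circ> a))" by (simp only: o_assoc)
    finally show "b \<circ> a = a \<circ> b" using inv_comp by simp
  next
    assume "b \<circ> a = a \<circ> b"
    then show "inv (a \<circ> b) \<circ> (b \<circ> a) = id" using inj_iff bij_is_inj[OF ab] by metis
  qed
  ultimately show ?thesis by simp
qed

lemma strict_mono_image_greaterThanLessThan:
  fixes g :: "real \<Rightarrow> real"
  assumes "strict_mono g" "surj g"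
  shows "g ` {l<..<r} = {g l<..<g r}"
proof
  show "g ` {l<..<r} \<subseteq> {g l<..<g r}" using assms(1) by (auto simp: strict_mono_less)
  show "{g l<..<g r} \<subseteq> g ` {l<..<r}"
  proof
    fix y
    assume y: "y \<in> {g l<..<g r}"
    obtain x where "y = g x" using assms(2) by (metis surjD)
    then show "y \<in> g ` {l<..<r}" using y assms(1) by (auto simp: strict_mono_less)
  qed
qed

lemma invariant_interval_fixes_endpoints:
  fixes g :: "real \<Rightarrow> real"
  assumes "strict_mono g" "surj g" "g ` {l<..<r} = {l<..<r}" "l < r"
  shows "g l = l" "g r = r"
  using assms strict_mono_image_greaterThanLessThan[OF assms(1,2), of l r]
  by (auto simp: greaterThanLessThan_eq_iff strict_mono_less)

lemma crossing_intervals: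
  fixes p q l r :: real
  assumes "{p<..<q} \<inter> {l<..<r} \<noteq> {}"
    and "\<not> {p<..<q} \<subseteq> {l<..<r}" "\<not> {l<..<r} \<subseteq> {p<..<q}"
  obtains a b where "a \<in> {p, q}" "a \<in> {l<..<r}" "b \<in> {l, r}" "b \<in> {p<..<q}"
proof -
  have "p < r" "l < q" "p < q" "l < r" using assms(1) by auto
  moreover have "\<not> (l \<le> p \<and> q \<le> r)" "\<not> (p \<le> l \<and> r \<le> q)"
    using assms(2,3) greaterThanLessThan_subseteq_greaterThanLessThan by blast+
  ultimately consider "p < l" "q < r" | "l < p" "r < q" by linarith
  then show thesis
  proof cases
    case 1
    then show thesis using that[of q l] \<open>l < q\<close> by auto
  next
    case 2
    then show thesis using that[of p r] \<open>p < r\<close> by auto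
  qed
qed

lemma funpow_commute_apply:
  assumes "h \<circ> w = w \<circ> h"
  shows "h ((w ^^ n) x) = (w ^^ n) (h x)"
  using assms by (induction n) (simp_all add: fun_eq_iff)

lemma funpow_mem_interval:
  fixes w :: "real \<Rightarrow> real"
  assumes "strict_mono w" "w p = p" "\<forall>x\<in>{p<..<q}. w x < x" "x \<in> {p<..<q}"
  shows "(w ^^ n) x \<in> {p<..<q}"
proof (induction n)
  case (Suc n)
  then have "p < w ((w ^^ n) x)"
    using assms(1,2) by (metis greaterThanLessThan_iff strict_mono_less)
  moreover have "w ((w ^^ n) x) < q" using Suc assms(3) by fastforce
  ultimately show ?case by simp
qed (use assms(4) in simp)

lemma funpow_tendsto_fixed_point:
  fixes w :: "real \<Rightarrow> real"
  assumes cont: "continuous_on UNIV w" and mono: "strict_mono w" and wp: "w p = p"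
    and down: "\<forall>x\<in>{p<..<q}. w x < x" and x: "x \<in> {p<..<q}"
  shows "(\<lambda>n. (w ^^ n) x) \<longlonglongrightarrow> p"
proof -
  define X where "X = (\<lambda>n. (w ^^ n) x)"
  have X_mem: "X n \<in> {p<..<q}" for n
    unfolding X_def using funpow_mem_interval[OF mono wp down x] .
  have X_Suc: "X (Suc n) = w (X n)" for n by (simp add: X_def)
  have "decseq X"
    unfolding decseq_Suc_iff using X_Suc X_mem down by (simp add: less_imp_le)
  moreover have "\<forall>n. p \<le> X n" using X_mem by (simp add: less_imp_le)
  ultimately obtain L where L: "X \<longlonglongrightarrow> L" "\<forall>n. L \<le> X n"
    using decseq_convergent by blast
  have "w L = L"
  proof (rule LIMSEQ_unique)
    show "(\<lambda>n. X (Suc n)) \<longlonglongrightarrow> L" using L(1) by (rule LIMSEQ_Suc)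
    show "(\<lambda>n. X (Suc n)) \<longlonglongrightarrow> w L"
      unfolding X_Suc using L(1) cont
      by (simp add: continuous_on_eq_continuous_at isCont_tendsto_compose)
  qed
  moreover have "p \<le> L" using LIMSEQ_le_const[OF L(1)] X_mem by (simp add: less_imp_le)
  moreover have "L < q" using L(2) X_mem[of 0] by (meson greaterThanLessThan_iff le_less_trans)
  ultimately have "L = p" using down by force
  then show ?thesis using L(1) by (simp add: X_def)
qed

lemma commuting_fixes_interval:
  fixes w h :: "real \<Rightarrow> real"
  assumes cont: "continuous_on UNIV w" and mono: "strict_mono w" and wp: "w p = p"
    and down: "\<forall>x\<in>{p<..<q}. w x < x"
    and comm: "h \<circ> w = w \<circ> h" and germs: "right_affine_germs h"
    and e: "e \<in> {p<..<q}" "h e = e"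
  shows "\<forall>x\<in>{p<..<q}. h x = x"
proof -
  obtain d m k where d: "d > 0" and affine: "\<forall>x\<in>{p..p+d}. h x = m * x + k"
    using germs unfolding right_affine_germs_def by blast
  have enters_germ: "\<exists>n. (w ^^ n) x < p + d" if "x \<in> {p<..<q}" for x
    using order_tendstoD(2)[OF funpow_tendsto_fixed_point[OF cont mono wp down that], of "p + d"] d
    by (auto dest: eventually_happens)
  obtain n where n: "(w ^^ n) e < p + d" using enters_germ[OF e(1)] by blast
  define x1 where "x1 = (w ^^ n) e"
  define x2 where "x2 = w x1"
  have x1: "x1 \<in> {p<..<q}" and x2: "x2 \<in> {p<..<q}"
    using funpow_mem_interval[OF mono wp down e(1), of n]
      funpow_mem_interval[OF mono wp down e(1), of "Suc n"]
    by (simp_all add: x1_def x2_def)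
  have "x2 < x1" using down x1 by (simp add: x2_def)
  have "h x1 = x1" using funpow_commute_apply[OF comm] e(2) by (simp add: x1_def)
  moreover have "h x2 = x2" using comm \<open>h x1 = x1\<close> unfolding x2_def by (metis comp_apply)
  moreover have "h x1 = m * x1 + k" "h x2 = m * x2 + k"
    using affine x1 x2 n \<open>x2 < x1\<close> by (simp_all add: x1_def)
  ultimately have "(m - 1) * (x1 - x2) = 0" by (simp add: algebra_simps)
  then have "m = 1" "k = 0" using \<open>x2 < x1\<close> \<open>h x1 = x1\<close> \<open>h x1 = m * x1 + k\<close> by auto
  then have id_near_p: "h y = y" if "y \<in> {p..p+d}" for y using affine that by simp
  show ?thesis
  proof
    fix x
    assume x: "x \<in> {p<..<q}"
    obtain n where "(w ^^ n) x < p + d" using enters_germ[OF x] by blast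
    then have "h ((w ^^ n) x) = (w ^^ n) x"
      using funpow_mem_interval[OF mono wp down x, of n] id_near_p by simp
    then have "(w ^^ n) (h x) = (w ^^ n) x" by (simp add: funpow_commute_apply[OF comm])
    then show "h x = x" using inj_fn[OF strict_mono_imp_inj_on[OF mono]] by (simp add: inj_eq)
  qed
qed

lemma no_fixed_point_sign:
  fixes u :: "real \<Rightarrow> real"
  assumes cont: "continuous_on UNIV u" and no_fix: "\<forall>x\<in>{p<..<q}. u x \<noteq> x"
  shows "(\<forall>x\<in>{p<..<q}. u x < x) \<or> (\<forall>x\<in>{p<..<q}. x < u x)"
proof (rule ccontr)
  assume "\<not> ?thesis"
  then obtain x1 x2 where x1: "x1 \<in> {p<..<q}" "x1 < u x1" and x2: "x2 \<in> {p<..<q}" "u x2 < x2"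
    using no_fix by (metis linorder_neqE_linordered_idom)
  define g where "g x = u x - x" for x
  have "continuous_on S g" for S
    unfolding g_def by (intro continuous_intros continuous_on_subset[OF cont]) auto
  moreover have "0 < g x1" "g x2 < 0" using x1 x2 by (auto simp: g_def)
  ultimately obtain z where "z \<in> closed_segment x1 x2" "g z = 0"
    using IVT'[of g x2 0 x1] IVT2'[of g x2 0 x1]
    by (cases "x1 \<le> x2") (auto simp: closed_segment_eq_real_ivl)
  moreover have "closed_segment x1 x2 \<subseteq> {p<..<q}"
    using x1(1) x2(1) by (auto simp: closed_segment_eq_real_ivl)
  ultimately show False using no_fix by (auto simp: g_def)
qed

lemma orbital_subset_supp_of_commuting:
  assumes u: "affine_germ_homeo u" and h: "affine_germ_homeo h" and comm: "h \<circ> u = u \<circ> h"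
    and a: "a \<in> supp u" "a \<in> supp h"
  shows "connected_component_set (supp u) a \<subseteq> supp h"
proof -
  have cont: "continuous_on UNIV u" and mono: "strict_mono u" and bij: "bij u"
    and outside: "\<forall>x. x \<notin> {0..1} \<longrightarrow> u x = x" and germs: "right_affine_germs h"
    using u h unfolding affine_germ_homeo_def by auto
  obtain p q where up: "u p = p" and uq: "u q = q"
    and C: "connected_component_set (supp u) a = {p<..<q}"
    using connected_component_supp_interval[OF cont outside a(1)] by blast
  have no_fix: "\<forall>x\<in>{p<..<q}. u x \<noteq> x"
    using connected_component_subset[of "supp u" a] C by (auto simp: supp_def)
  have "h e \<noteq> e" if e: "e \<in> {p<..<q}" for e
  proof
    assume he: "h e = e"
    from no_fixed_point_sign[OF cont no_fix]
    have "\<forall>x\<in>{p<..<q}. h x = x"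
    proof
      assume "\<forall>x\<in>{p<..<q}. u x < x"
      then show ?thesis using commuting_fixes_interval[OF cont mono up _ comm germs e he] by blast
    next
      assume up_right: "\<forall>x\<in>{p<..<q}. x < u x"
      have w: "continuous_on UNIV (inv u)" "strict_mono (inv u)"
        using affine_germ_homeo_inv[OF u] unfolding affine_germ_homeo_def by auto
      have u_inv: "u (inv u x) = x" for x using bij by (simp add: bij_is_surj surj_f_inv_f)
      have wp: "inv u p = p" "inv u q = q" using up uq bij by (simp_all add: bij_is_inj inv_f_eq)
      have "inv u x < x" if "x \<in> {p<..<q}" for x
      proof -
        have "inv u p < inv u x" "inv u x < inv u q"
          using that w(2) by (auto simp: strict_mono_less)
        then have "inv u x \<in> {p<..<q}" using wp by simp
        then show ?thesis using up_right u_inv by metis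
      qed
      moreover have "h \<circ> inv u = inv u \<circ> h"
      proof
        fix x
        have "u (h (inv u x)) = h x" using comm u_inv by (metis comp_apply)
        then show "(h \<circ> inv u) x = (inv u \<circ> h) x" using bij by (simp add: bij_is_inj inv_f_eq)
      qed
      ultimately show ?thesis using commuting_fixes_interval[OF w wp(1) _ _ germs e he] by blast
    qed
    then show False using a C connected_component_refl_eq by (auto simp: supp_def)
  qed
  then show ?thesis using C by (auto simp: supp_def)
qed

lemma commuting_same_orbital:
  assumes "affine_germ_homeo u" "affine_germ_homeo h" "h \<circ> u = u \<circ> h"
    and "a \<in> supp u" "a \<in> supp h"
  shows "connected_component_set (supp u) a = connected_component_set (supp h) a"
proof -
  have sub: "connected_component_set (supp v) a \<subseteq> connected_component_set (supp g) a"
    if "affine_germ_homeo v" "affine_germ_homeo g" "g \<circ> v = v \<circ> g" "a \<in> supp v" "a \<in> supp g"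
    for v g
    using that orbital_subset_supp_of_commuting[OF that]
    by (intro connected_component_maximal) auto
  show ?thesis
    using sub[OF assms] sub[OF assms(2,1) assms(3)[symmetric] assms(5,4)] by (rule subset_antisym)
qed

lemma orbital_invariant_of_commuting_conjugates:
  assumes f0: "affine_germ_homeo f0" and f1: "affine_germ_homeo f1" and u: "affine_germ_homeo u"
    and comm1: "(f0 \<circ> f1 \<circ> inv f0) \<circ> u = u \<circ> (f0 \<circ> f1 \<circ> inv f0)"
    and comm2: "((f0 \<circ> f0) \<circ> f1 \<circ> inv (f0 \<circ> f0)) \<circ> u = u \<circ> ((f0 \<circ> f0) \<circ> f1 \<circ> inv (f0 \<circ> f0))"
    and f0a: "f0 a = a" and a: "a \<in> supp f1" "a \<in> supp u"
  shows "f0 ` connected_component_set (supp f1) a = connected_component_set (supp f1) a"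
proof -
  let ?B = "connected_component_set (supp f1) a"
  have f00: "affine_germ_homeo (f0 \<circ> f0)" using affine_germ_homeo_comp[OF f0 f0] .
  have conj: "affine_germ_homeo (g \<circ> f1 \<circ> inv g)" if "affine_germ_homeo g" for g
    using that f1 by (intro affine_germ_homeo_comp affine_germ_homeo_inv)
  have supp_conj_fixed: "a \<in> supp (g \<circ> f1 \<circ> inv g)" if "affine_germ_homeo g" "g a = a" for g
    using that a(1) supp_conj[of g f1] by (force simp: affine_germ_homeo_def)
  have "f0 ` ?B = connected_component_set (supp (f0 \<circ> f1 \<circ> inv f0)) a"
    using connected_component_supp_conj[OF f0, of f1 a] f0a by simp
  also have "\<dots> = connected_component_set (supp u) a"
    using commuting_same_orbital[OF u conj[OF f0] comm1 a(2) supp_conj_fixed[OF f0 f0a]] ..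
  also have "\<dots> = connected_component_set (supp ((f0 \<circ> f0) \<circ> f1 \<circ> inv (f0 \<circ> f0))) a"
    using commuting_same_orbital[OF u conj[OF f00] comm2 a(2) supp_conj_fixed[OF f00]] f0a by simp
  also have "\<dots> = (f0 \<circ> f0) ` ?B"
    using connected_component_supp_conj[OF f00, of f1 a] f0a by simp
  finally have "f0 ` ?B = f0 ` (f0 ` ?B)" unfolding image_comp .
  then show ?thesis
    using f0 by (simp add: affine_germ_homeo_def bij_is_inj inj_image_eq_iff)
qed

lemma commutator_relations_orbital_invariant:
  assumes f0: "affine_germ_homeo f0" and f1: "affine_germ_homeo f1"
    and rel1: "pl_comm (pl_conj f1 f0) (pl_mult f0 (pl_inv f1)) = id"
    and rel2: "pl_comm (pl_mult f0 (pl_inv f1)) (pl_conj f1 (pl_mult f0 f0)) = id"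
    and B: "orbital f1 B" and a: "a \<in> B" "f0 a = a"
  shows "f0 ` B = B"
proof -
  define u where "u = inv f1 \<circ> f0"
  have u: "affine_germ_homeo u"
    unfolding u_def using f0 f1 by (intro affine_germ_homeo_comp affine_germ_homeo_inv)
  have bij: "bij f0" "bij f1" "bij u" using f0 f1 u by (simp_all add: affine_germ_homeo_def)
  have bij_conj: "bij (g \<circ> f1 \<circ> inv g)" if "bij g" for g
    using that bij(2) by (simp add: bij_comp bij_imp_bij_inv)
  have comm1: "(f0 \<circ> f1 \<circ> inv f0) \<circ> u = u \<circ> (f0 \<circ> f1 \<circ> inv f0)"
    using rel1 pl_comm_eq_id_iff[OF bij_conj[OF bij(1)] bij(3)]
    by (simp add: pl_conj_def pl_mult_def pl_inv_def u_def comp_assoc)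
  have comm2: "((f0 \<circ> f0) \<circ> f1 \<circ> inv (f0 \<circ> f0)) \<circ> u = u \<circ> ((f0 \<circ> f0) \<circ> f1 \<circ> inv (f0 \<circ> f0))"
    using rel2 pl_comm_eq_id_iff[OF bij(3) bij_conj[OF bij_comp[OF bij(1) bij(1)]]]
    by (simp add: pl_conj_def pl_mult_def pl_inv_def u_def comp_assoc)
  have "a \<in> supp f1" using orbital_subset_supp[OF B] a(1) by (rule subsetD)
  then have "f1 a \<noteq> a" by (simp add: supp_def)
  then have "inv f1 a \<noteq> a" using bij(2) by (metis bij_inv_eq_iff)
  then have "a \<in> supp u" using a(2) by (simp add: supp_def u_def)
  then show ?thesis
    using orbital_invariant_of_commuting_conjugates[OF f0 f1 u comm1 comm2 a(2) \<open>a \<in> supp f1\<close>]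
      orbital_eq_connected_component[OF B a(1)] by simp
qed

theorem lemma2p3:
  fixes f0 f1 :: "real \<Rightarrow> real" and A B :: "real set"
  assumes "PL0 f0" and "PL0 f1"
    and "pl_comm (pl_conj f1 f0) (pl_mult f0 (pl_inv f1)) = id"
    and "pl_comm (pl_mult f0 (pl_inv f1)) (pl_conj f1 (pl_mult f0 f0)) = id"
    and "orbital f0 A" and "orbital f1 B" and "A \<inter> B \<noteq> {}"
  shows "A \<subseteq> B \<or> B \<subseteq> A"
proof (rule ccontr)
  assume crossing: "\<not> (A \<subseteq> B \<or> B \<subseteq> A)"
  have f0: "affine_germ_homeo f0" and f1: "affine_germ_homeo f1"
    using assms(1,2) by (simp_all add: PL0_affine_germ_homeo)
  obtain p q where A: "f0 p = p" "f0 q = q" "A = {p<..<q}"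
    using orbital_interval[OF _ _ assms(5)] f0 unfolding affine_germ_homeo_def by blast
  obtain l r where B: "B = {l<..<r}"
    using orbital_interval[OF _ _ assms(6)] f1 unfolding affine_germ_homeo_def by blast
  have "{p<..<q} \<inter> {l<..<r} \<noteq> {}" "\<not> {p<..<q} \<subseteq> {l<..<r}" "\<not> {l<..<r} \<subseteq> {p<..<q}"
    using assms(7) crossing unfolding A(3) B by auto
  then obtain a b where a: "a \<in> {p, q}" "a \<in> {l<..<r}" and b: "b \<in> {l, r}" "b \<in> {p<..<q}"
    by (rule crossing_intervals)
  have "f0 ` {l<..<r} = {l<..<r}"
    using commutator_relations_orbital_invariant[OF f0 f1 assms(3,4,6)] a A(1,2) B by auto
  then have "f0 l = l" "f0 r = r"
    using invariant_interval_fixes_endpoints[of f0 l r] f0 a(2)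
    by (simp_all add: affine_germ_homeo_def bij_is_surj)
  then have "f0 b = b" using b(1) by auto
  moreover have "b \<in> supp f0"
    using orbital_subset_supp[OF assms(5)] b(2) unfolding A(3) by (rule subsetD)
  ultimately show False by (simp add: supp_def)
qed

end
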